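(* Let $T\subset V$ be an open cone with basepoint $b\in T$, let $p\in\partial T\setminus[0]_T$, let $z\in T$, and put $y_\lambda:=(1-\lambda)p+\lambda z$ for $\lambda\in(0,1)$. Then $\lim_{\lambda\to0}r_{T,p}(y_\lambda)=-RF_T(b,p)$.
   Context: $V$ is a finite-dimensional real vector space. An open cone is a nonempty open convex set $T\subset V$ with $\lambda T\subseteq T$ for all $\lambda>0$ and $0\notin T$; $\partial T$ its boundary. Write $x\le_T y$ iff $y-x\in\overline T$, $[0]_T:=\overline T\cap(-\overline T)$. $M_T(y/x):=\inf\{\lambda>0:y\le_T\lambda x\}$ for $y\in V$, $x\in T$; the reverse Funk function is $RF_T(x,y):=\log M_T(y/x)$ for $x\in T$, $y\in V$. For $p\in\partial T\setminus[0]_T$, $r_{T,p}(x):=RF_T(x,p)-RF_T(b,p)$, $x\in T$. *)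

theory Defs
  imports "HOL-Analysis.Analysis"
begin

definition open_cone :: "'a::euclidean_space set \<Rightarrow> bool" where
  "open_cone T \<longleftrightarrow> T \<noteq> {} \<and> open T \<and> convex T \<and>
     (\<forall>c::real. c > 0 \<longrightarrow> (\<lambda>x. c *\<^sub>R x) ` T \<subseteq> T) \<and> 0 \<notin> T"

definition cone_le :: "'a::euclidean_space set \<Rightarrow> 'a \<Rightarrow> 'a \<Rightarrow> bool" where
  "cone_le T x y \<longleftrightarrow> y - x \<in> closure T"

definition cone_zero :: "'a::euclidean_space set \<Rightarrow> 'a set" where
  "cone_zero T = closure T \<inter> uminus ` closure T"

definition cone_M :: "'a::euclidean_space set \<Rightarrow> 'a \<Rightarrow> 'a \<Rightarrow> real" where
  "cone_M T y x = Inf {c::real. c > 0 \<and> cone_le T y (c *\<^sub>R x)}"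

definition reverse_funk :: "'a::euclidean_space set \<Rightarrow> 'a \<Rightarrow> 'a \<Rightarrow> real" where
  "reverse_funk T x y = ln (cone_M T y x)"

definition horofun :: "'a::euclidean_space set \<Rightarrow> 'a \<Rightarrow> 'a \<Rightarrow> 'a \<Rightarrow> real" where
  "horofun T b p x = reverse_funk T x p - reverse_funk T b p"

end

theory Submission
  imports Defs
begin

text \<open>Since \<open>z \<in> closure T\<close>, the difference
  \<open>y\<^sub>\<lambda> /(1 - \<lambda>) - p\<close> is a positive multiple of \<open>z\<close>, so \<open>M\<^sub>T(p/y\<^sub>\<lambda>) \<le> 1/(1 - \<lambda>)\<close>.
  Conversely, as \<open>-p\<close> lies outside the closed set \<open>closure T\<close>, so does \<open>t z - p\<close> for
  \<open>0 \<le> t < e\<close>; if \<open>c y\<^sub>\<lambda> - p \<in> closure T\<close> with \<open>c < 1\<close>, rescaling \<open>c y\<^sub>\<lambda> - p\<close> to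
  the form \<open>t z - p\<close> forces \<open>c \<ge> e/(\<lambda> + e(1 - \<lambda>))\<close>. Both bounds tend to \<open>1\<close>,
  hence \<open>RF\<^sub>T(y\<^sub>\<lambda>, p) = log M\<^sub>T(p/y\<^sub>\<lambda>) \<rightarrow> 0\<close>. The basepoint enters only through the
  constant \<open>RF\<^sub>T(b, p)\<close>.\<close>

lemma open_cone_closure_scaleR:
  assumes "open_cone T" "c > 0" "x \<in> closure T"
  shows "c *\<^sub>R x \<in> closure T"
proof -
  have "c *\<^sub>R x \<in> closure ((*\<^sub>R) c ` T)"
    using assms(3) closure_scaleR by blast
  also have "\<dots> \<subseteq> closure T"
    using assms(1,2) unfolding open_cone_def by (intro closure_mono) auto
  finally show ?thesis .
qed

lemma cone_M_le:
  assumes "c > 0" "cone_le T y (c *\<^sub>R x)"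
  shows "cone_M T y x \<le> c"
  unfolding cone_M_def using assms by (intro cInf_lower bdd_belowI[of _ 0]) auto

lemma cone_M_ge:
  assumes "c\<^sub>0 > 0" "cone_le T y (c\<^sub>0 *\<^sub>R x)"
    and "\<And>c. c > 0 \<Longrightarrow> cone_le T y (c *\<^sub>R x) \<Longrightarrow> a \<le> c"
  shows "a \<le> cone_M T y x"
  unfolding cone_M_def using assms by (intro cInf_greatest) auto

lemma eventually_scaleR_minus_notin_closed:
  fixes S :: "'a::real_normed_vector set"
  assumes "closed S" "- p \<notin> S"
  shows "eventually (\<lambda>t. t *\<^sub>R z - p \<notin> S) (nhds 0)"
proof -
  have "((\<lambda>t. t *\<^sub>R z - p) \<longlongrightarrow> - p) (nhds 0)"
    using filterlim_ident[of "nhds (0::real)"] by (intro tendsto_eq_intros) auto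
  then show ?thesis
    using topological_tendstoD[OF _ open_Compl[OF assms(1)]] assms(2) by force
qed

lemma cone_le_segment:
  assumes "open_cone T" "z \<in> closure T" "0 < l" "l < 1"
  shows "cone_le T p ((1 / (1 - l)) *\<^sub>R ((1 - l) *\<^sub>R p + l *\<^sub>R z))"
proof -
  have "(1 / (1 - l)) *\<^sub>R ((1 - l) *\<^sub>R p + l *\<^sub>R z) - p = (l / (1 - l)) *\<^sub>R z"
    using assms(4) by (simp add: scaleR_add_right)
  moreover have "(l / (1 - l)) *\<^sub>R z \<in> closure T"
    using assms by (intro open_cone_closure_scaleR) auto
  ultimately show ?thesis
    unfolding cone_le_def by simp
qed

lemma cone_M_segment_upper:
  assumes "open_cone T" "z \<in> closure T" "0 < l" "l < 1"
  shows "cone_M T p ((1 - l) *\<^sub>R p + l *\<^sub>R z) \<le> 1 / (1 - l)"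
  using assms by (intro cone_M_le cone_le_segment) auto

lemma cone_M_segment_lower:
  assumes "open_cone T" "z \<in> closure T" "0 < l" "l < 1" "0 < e" "e \<le> 1"
    and outside: "\<And>t. 0 \<le> t \<Longrightarrow> t < e \<Longrightarrow> t *\<^sub>R z - p \<notin> closure T"
  shows "e / (l + e * (1 - l)) \<le> cone_M T p ((1 - l) *\<^sub>R p + l *\<^sub>R z)"
proof (rule cone_M_ge)
  show "0 < 1 / (1 - l)"
    using assms(4) by simp
  show "cone_le T p ((1 / (1 - l)) *\<^sub>R ((1 - l) *\<^sub>R p + l *\<^sub>R z))"
    using assms(1-4) by (rule cone_le_segment)
  have den: "l + e * (1 - l) > 0"
    using assms(3-5) by (simp add: add_pos_nonneg)
  fix c :: real
  assume "c > 0" and "cone_le T p (c *\<^sub>R ((1 - l) *\<^sub>R p + l *\<^sub>R z))"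
  then have c: "c *\<^sub>R ((1 - l) *\<^sub>R p + l *\<^sub>R z) - p \<in> closure T"
    unfolding cone_le_def by simp
  show "e / (l + e * (1 - l)) \<le> c"
  proof (cases "c < 1")
    case False
    have "e \<le> 1 * (l + e * (1 - l))"
      using assms(3,6) by (simp add: algebra_simps)
    also have "\<dots> \<le> c * (l + e * (1 - l))"
      using False den by (intro mult_right_mono) auto
    finally show ?thesis
      using den by (simp add: pos_divide_le_eq)
  next
    case True
    define d where "d = 1 - c * (1 - l)"
    have d: "d > 0"
      unfolding d_def using True \<open>c > 0\<close> assms(3,4)
      by (smt (verit) mult_left_le_one_le)
    have "c *\<^sub>R ((1 - l) *\<^sub>R p + l *\<^sub>R z) - p = (c * l) *\<^sub>R z - d *\<^sub>R p"
      by (simp add: d_def algebra_simps)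
    then have "(1 / d) *\<^sub>R (c *\<^sub>R ((1 - l) *\<^sub>R p + l *\<^sub>R z) - p) = ((c * l) / d) *\<^sub>R z - p"
      using d by (simp add: scaleR_diff_right)
    moreover have "(1 / d) *\<^sub>R (c *\<^sub>R ((1 - l) *\<^sub>R p + l *\<^sub>R z) - p) \<in> closure T"
      using assms(1) c d by (intro open_cone_closure_scaleR) auto
    ultimately have "\<not> (c * l) / d < e"
      using outside[of "(c * l) / d"] \<open>c > 0\<close> assms(3) d by auto
    then have "e * (1 - c * (1 - l)) \<le> c * l"
      using d by (simp add: d_def field_simps)
    then show ?thesis
      using den by (simp add: field_simps)
  qed
qed

lemma cone_M_segment_tendsto_1:
  assumes "open_cone T" "- p \<notin> closure T" "z \<in> closure T"
  shows "((\<lambda>l. cone_M T p ((1 - l) *\<^sub>R p + l *\<^sub>R z)) \<longlongrightarrow> 1) (at_right 0)"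
proof -
  obtain d where "d > 0" and d: "\<And>t. dist t 0 < d \<Longrightarrow> t *\<^sub>R z - p \<notin> closure T"
    using eventually_scaleR_minus_notin_closed[OF closed_closure assms(2)]
    unfolding eventually_nhds_metric by blast
  define e where "e = min d 1"
  have e: "0 < e" "e \<le> 1" "\<And>t. 0 \<le> t \<Longrightarrow> t < e \<Longrightarrow> t *\<^sub>R z - p \<notin> closure T"
    using \<open>d > 0\<close> d by (auto simp: e_def)
  have in_unit: "eventually (\<lambda>l. 0 < l \<and> l < 1) (at_right (0::real))"
    by (simp add: eventually_at_right_field) (metis zero_less_one)
  show ?thesis
  proof (rule tendsto_sandwich)
    show "eventually (\<lambda>l. e / (l + e * (1 - l)) \<le> cone_M T p ((1 - l) *\<^sub>R p + l *\<^sub>R z))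
        (at_right 0)"
      using in_unit by eventually_elim (use assms e in \<open>auto intro: cone_M_segment_lower\<close>)
    show "eventually (\<lambda>l. cone_M T p ((1 - l) *\<^sub>R p + l *\<^sub>R z) \<le> 1 / (1 - l)) (at_right 0)"
      using in_unit by eventually_elim (use assms in \<open>auto intro: cone_M_segment_upper\<close>)
    have "((\<lambda>l. e / (l + e * (1 - l))) \<longlongrightarrow> e / (0 + e * (1 - 0))) (at_right 0)"
      using e by (intro tendsto_intros) auto
    then show "((\<lambda>l. e / (l + e * (1 - l))) \<longlongrightarrow> 1) (at_right 0)"
      using e by simp
    have "((\<lambda>l::real. 1 / (1 - l)) \<longlongrightarrow> 1 / (1 - 0)) (at_right 0)"
      by (intro tendsto_intros) auto
    then show "((\<lambda>l::real. 1 / (1 - l)) \<longlongrightarrow> 1) (at_right 0)"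
      by simp
  qed
qed

theorem mainTheorem19:
  fixes T :: "'a::euclidean_space set" and b p z :: 'a
  assumes "open_cone T" and "b \<in> T"
    and "p \<in> frontier T - cone_zero T" and "z \<in> T"
  shows "((\<lambda>l::real. horofun T b p ((1 - l) *\<^sub>R p + l *\<^sub>R z))
           \<longlongrightarrow> - reverse_funk T b p) (at_right 0)"
proof -
  have "p \<in> closure T" "p \<notin> cone_zero T"
    using assms(3) by (auto simp: frontier_def)
  have "- p \<notin> closure T"
  proof
    assume "- p \<in> closure T"
    then have "p \<in> uminus ` closure T"
      using image_eqI[of p uminus "- p"] by simp
    with \<open>p \<in> closure T\<close> \<open>p \<notin> cone_zero T\<close> show False
      unfolding cone_zero_def by blast
  qed
  moreover have "z \<in> closure T"
    using assms(4) closure_subset by blast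
  ultimately have "((\<lambda>l. cone_M T p ((1 - l) *\<^sub>R p + l *\<^sub>R z)) \<longlongrightarrow> 1) (at_right 0)"
    using assms(1) by (intro cone_M_segment_tendsto_1)
  then have "((\<lambda>l. ln (cone_M T p ((1 - l) *\<^sub>R p + l *\<^sub>R z)) - reverse_funk T b p)
      \<longlongrightarrow> ln 1 - reverse_funk T b p) (at_right 0)"
    by (intro tendsto_intros) auto
  then show ?thesis
    unfolding horofun_def reverse_funk_def by simp
qed

end
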